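(* Let $\operatorname{R}_3=\{a_0,a_1,a_2\}$ be the dihedral quandle of order $3$, with $a_ia_j=a_{2j-i \pmod 3}$. Then $\operatorname{Aut}(\mathbb{Z}[\operatorname{R}_3])\cong\Sigma_3\cong\operatorname{Aut}(\operatorname{R}_3)$.
   Context: For a quandle $Q$, the quandle ring $\mathbb{Z}[Q]$ is the free abelian group with basis $Q$, with multiplication $\big(\sum_i\alpha_i q_i\big)\big(\sum_j\beta_j q_j\big)=\sum_{i,j}\alpha_i\beta_j (q_iq_j)$. $\operatorname{Aut}(\mathbb{Z}[Q])$ denotes the group of ring automorphisms of $\mathbb{Z}[Q]$, $\operatorname{Aut}(Q)$ the group of quandle automorphisms of $Q$, and $\Sigma_3$ the symmetric group on three letters. *)

theory Defs
  imports "HOL-Algebra.Bij" "HOL-Algebra.Sym_Groups"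
begin

text \<open>Quandle ring Z[Q] of a finite quandle (Q, op): elements are integer-valued
  functions on the underlying type supported in Q (the free abelian group on Q).\<close>

definition qring_carrier :: "'a set \<Rightarrow> ('a \<Rightarrow> int) set" where
  "qring_carrier Q = {x. \<forall>q. q \<notin> Q \<longrightarrow> x q = 0}"

definition qring_add :: "('a \<Rightarrow> int) \<Rightarrow> ('a \<Rightarrow> int) \<Rightarrow> ('a \<Rightarrow> int)" where
  "qring_add x y = (\<lambda>q. x q + y q)"

definition qring_mult :: "'a set \<Rightarrow> ('a \<Rightarrow> 'a \<Rightarrow> 'a) \<Rightarrow> ('a \<Rightarrow> int) \<Rightarrow> ('a \<Rightarrow> int) \<Rightarrow> ('a \<Rightarrow> int)" where
  "qring_mult Q op x y = (\<lambda>q. \<Sum>(p, r) \<in> {(p, r). p \<in> Q \<and> r \<in> Q \<and> op p r = q}. x p * y r)"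

definition qring_auts :: "'a set \<Rightarrow> ('a \<Rightarrow> 'a \<Rightarrow> 'a) \<Rightarrow> (('a \<Rightarrow> int) \<Rightarrow> ('a \<Rightarrow> int)) set" where
  "qring_auts Q op = {f \<in> Bij (qring_carrier Q).
     \<forall>x \<in> qring_carrier Q. \<forall>y \<in> qring_carrier Q.
        f (qring_add x y) = qring_add (f x) (f y) \<and>
        f (qring_mult Q op x y) = qring_mult Q op (f x) (f y)}"

definition qring_Aut :: "'a set \<Rightarrow> ('a \<Rightarrow> 'a \<Rightarrow> 'a) \<Rightarrow> (('a \<Rightarrow> int) \<Rightarrow> ('a \<Rightarrow> int)) monoid" where
  "qring_Aut Q op = (BijGroup (qring_carrier Q))\<lparr>carrier := qring_auts Q op\<rparr>"

definition quandle_Aut :: "'a set \<Rightarrow> ('a \<Rightarrow> 'a \<Rightarrow> 'a) \<Rightarrow> ('a \<Rightarrow> 'a) monoid" where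
  "quandle_Aut Q op = (BijGroup Q)\<lparr>carrier :=
     {f \<in> Bij Q. \<forall>x \<in> Q. \<forall>y \<in> Q. f (op x y) = op (f x) (f y)}\<rparr>"

text \<open>Dihedral quandle R_3 = {a_0, a_1, a_2}, a_i is encoded as i; a_i a_j = a_{2j - i mod 3}.\<close>
definition R3 :: "nat set" where "R3 = {0, 1, 2}"

definition R3_op :: "nat \<Rightarrow> nat \<Rightarrow> nat" where
  "R3_op i j = (2 * j + 3 - i) mod 3"

end

theory Submission
  imports Defs
begin

text \<open>
  An automorphism of a ring maps nonzero idempotents to nonzero idempotents. If the only
  idempotents of \<open>\<int>[Q]\<close> are \<open>0\<close> and the basis elements \<open>e\<^sub>q\<close>, every ring automorphism
  therefore permutes the basis; being additive, it is determined by that permutation, which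
  preserves the quandle operation because \<open>e\<^sub>p e\<^sub>q = e\<^bsub>pq\<^esub>\<close>. Conversely every quandle automorphism
  extends linearly to a ring automorphism, so \<open>Aut(\<int>[Q]) \<cong> Aut(Q)\<close>.
  For \<open>R\<^sub>3\<close> the coordinates \<open>(a, b, c)\<close> of an idempotent satisfy \<open>a\<^sup>2 + 2bc = a\<close> and its
  cyclic variants, whose only integer solutions are \<open>0\<close> and the unit vectors. Since \<open>a\<^sub>i a\<^sub>j\<close> is
  the third element of \<open>R\<^sub>3\<close> for \<open>i \<noteq> j\<close>, every permutation of \<open>R\<^sub>3\<close> is a quandle automorphism,
  so \<open>Aut(R\<^sub>3) \<cong> \<Sigma>\<^sub>3\<close>.
\<close>

section \<open>The quandle ring of a finite magma\<close>

definition qring_basis :: "'a \<Rightarrow> 'a \<Rightarrow> int" where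
  "qring_basis q = (\<lambda>p. if p = q then 1 else 0)"

lemma qring_basis_in_carrier: "q \<in> Q \<Longrightarrow> qring_basis q \<in> qring_carrier Q"
  by (simp add: qring_basis_def qring_carrier_def)

lemma qring_basis_eq_iff [simp]: "qring_basis p = qring_basis q \<longleftrightarrow> p = q"
  by (metis qring_basis_def zero_neq_one)

lemma qring_basis_neq_zero: "qring_basis q \<noteq> (\<lambda>_. 0)"
  by (metis qring_basis_def one_neq_zero)

lemma zero_in_qring_carrier: "(\<lambda>_. 0) \<in> qring_carrier Q"
  by (simp add: qring_carrier_def)

lemma qring_add_closed:
  "x \<in> qring_carrier Q \<Longrightarrow> y \<in> qring_carrier Q \<Longrightarrow> qring_add x y \<in> qring_carrier Q"
  by (simp add: qring_add_def qring_carrier_def)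

lemma qring_scale_closed: "x \<in> qring_carrier Q \<Longrightarrow> (\<lambda>q. n * x q) \<in> qring_carrier Q"
  by (simp add: qring_carrier_def)

lemma qring_mult_basis:
  assumes "finite Q" "p \<in> Q" "q \<in> Q"
  shows "qring_mult Q op (qring_basis p) (qring_basis q) = qring_basis (op p q)"
proof
  fix r
  let ?S = "{(a, b). a \<in> Q \<and> b \<in> Q \<and> op a b = r}"
  have "finite ?S"
    by (rule finite_subset[of _ "Q \<times> Q"]) (auto simp: assms(1))
  have "(\<Sum>(a, b) \<in> ?S. qring_basis p a * qring_basis q b) = (\<Sum>z \<in> ?S. if z = (p, q) then 1 else 0)"
    by (intro sum.cong) (auto simp: qring_basis_def split: if_splits)
  also have "\<dots> = (if (p, q) \<in> ?S then 1 else 0)"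
    using \<open>finite ?S\<close> by simp
  finally show "qring_mult Q op (qring_basis p) (qring_basis q) r = qring_basis (op p q) r"
    using assms by (simp add: qring_mult_def qring_basis_def)
qed

definition qring_additive :: "'a set \<Rightarrow> (('a \<Rightarrow> int) \<Rightarrow> ('a \<Rightarrow> int)) \<Rightarrow> bool" where
  "qring_additive Q f \<longleftrightarrow> (\<forall>x \<in> qring_carrier Q. \<forall>y \<in> qring_carrier Q.
     f (qring_add x y) = qring_add (f x) (f y))"

lemma qring_additive_zero:
  assumes "qring_additive Q f"
  shows "f (\<lambda>_. 0) = (\<lambda>_. 0)"
proof -
  have "f (qring_add (\<lambda>_. 0) (\<lambda>_. 0)) = qring_add (f (\<lambda>_. 0)) (f (\<lambda>_. 0))"
    using assms zero_in_qring_carrier[of Q] by (simp add: qring_additive_def)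
  then have "f (\<lambda>_. 0) q = f (\<lambda>_. 0) q + f (\<lambda>_. 0) q" for q
    by (simp add: qring_add_def fun_eq_iff)
  then show ?thesis by auto
qed

lemma qring_additive_scale:
  assumes f: "qring_additive Q f" and x: "x \<in> qring_carrier Q"
  shows "f (\<lambda>q. n * x q) = (\<lambda>q. n * f x q)"
proof (induction n rule: int_induct[where k = 0])
  case base
  then show ?case using qring_additive_zero[OF f] by simp
next
  case (step1 i)
  have "f (\<lambda>q. (i + 1) * x q) = f (qring_add (\<lambda>q. i * x q) x)"
    by (simp add: qring_add_def algebra_simps)
  also have "\<dots> = qring_add (f (\<lambda>q. i * x q)) (f x)"
    using f x qring_scale_closed[OF x] unfolding qring_additive_def by blast
  finally show ?case
    using step1.IH by (simp add: qring_add_def algebra_simps)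
next
  case (step2 i)
  have "f (\<lambda>q. i * x q) = f (qring_add (\<lambda>q. (i - 1) * x q) x)"
    by (simp add: qring_add_def algebra_simps)
  also have "\<dots> = qring_add (f (\<lambda>q. (i - 1) * x q)) (f x)"
    using f x qring_scale_closed[OF x] unfolding qring_additive_def by blast
  finally show ?case
    using step2.IH by (simp add: qring_add_def algebra_simps fun_eq_iff)
qed

lemma qring_additive_expansion:
  assumes Q: "finite Q" and f: "qring_additive Q f" and x: "x \<in> qring_carrier Q"
  shows "f x = (\<lambda>r. \<Sum>q \<in> Q. x q * f (qring_basis q) r)"
proof -
  have "f (\<lambda>r. if r \<in> S then x r else 0) = (\<lambda>r. \<Sum>q \<in> S. x q * f (qring_basis q) r)"
    if "S \<subseteq> Q" for S
    using finite_subset[OF that Q] that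
  proof (induction S rule: finite_induct)
    case empty
    then show ?case using qring_additive_zero[OF f] by simp
  next
    case (insert a S)
    let ?xS = "\<lambda>r. if r \<in> S then x r else 0" and ?xa = "\<lambda>r. x a * qring_basis a r"
    have in_carrier: "?xS \<in> qring_carrier Q" "?xa \<in> qring_carrier Q"
      using insert.prems qring_scale_closed[OF qring_basis_in_carrier, of a Q "x a"]
      by (auto simp: qring_carrier_def)
    have "(\<lambda>r. if r \<in> insert a S then x r else 0) = qring_add ?xS ?xa"
      using insert.hyps(2) by (auto simp: qring_add_def qring_basis_def fun_eq_iff)
    then have "f (\<lambda>r. if r \<in> insert a S then x r else 0) = qring_add (f ?xS) (f ?xa)"
      using f in_carrier unfolding qring_additive_def by simp
    also have "\<dots> = (\<lambda>r. (\<Sum>q \<in> S. x q * f (qring_basis q) r) + x a * f (qring_basis a) r)"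
      using insert qring_additive_scale[OF f qring_basis_in_carrier] by (simp add: qring_add_def)
    finally show ?case
      using insert.hyps by (simp add: add.commute)
  qed
  moreover have "(\<lambda>r. if r \<in> Q then x r else 0) = x"
    using x by (auto simp: qring_carrier_def)
  ultimately show ?thesis by force
qed

lemma qring_autsD:
  assumes "f \<in> qring_auts Q op"
  shows "bij_betw f (qring_carrier Q) (qring_carrier Q)" "f \<in> extensional (qring_carrier Q)"
    "qring_additive Q f"
    "\<And>x y. x \<in> qring_carrier Q \<Longrightarrow> y \<in> qring_carrier Q \<Longrightarrow>
      f (qring_mult Q op x y) = qring_mult Q op (f x) (f y)"
  using assms by (simp_all add: qring_auts_def Bij_def qring_additive_def)

lemma carrier_qring_Aut: "carrier (qring_Aut Q op) = qring_auts Q op"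
  by (simp add: qring_Aut_def)

lemma mult_qring_Aut:
  "f \<in> qring_auts Q op \<Longrightarrow> g \<in> qring_auts Q op \<Longrightarrow>
    f \<otimes>\<^bsub>qring_Aut Q op\<^esub> g = compose (qring_carrier Q) f g"
  by (simp add: qring_Aut_def BijGroup_def qring_auts_def)

lemma carrier_quandle_Aut:
  "carrier (quandle_Aut Q op) = {f \<in> Bij Q. \<forall>x \<in> Q. \<forall>y \<in> Q. f (op x y) = op (f x) (f y)}"
  by (simp add: quandle_Aut_def)

lemma mult_quandle_Aut: "f \<in> Bij Q \<Longrightarrow> g \<in> Bij Q \<Longrightarrow> f \<otimes>\<^bsub>quandle_Aut Q op\<^esub> g = compose Q f g"
  by (simp add: quandle_Aut_def BijGroup_def)

text \<open>The linear extension of a permutation \<open>\<sigma>\<close> of \<open>Q\<close> is the pullback along \<open>\<sigma>\<inverse>\<close>.\<close>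

definition qring_pullback :: "'a set \<Rightarrow> ('a \<Rightarrow> 'a) \<Rightarrow> ('a \<Rightarrow> int) \<Rightarrow> ('a \<Rightarrow> int)" where
  "qring_pullback Q \<tau> = (\<lambda>x \<in> qring_carrier Q. \<lambda>q. if q \<in> Q then x (\<tau> q) else 0)"

lemma qring_pullback_in_carrier:
  "x \<in> qring_carrier Q \<Longrightarrow> qring_pullback Q \<tau> x \<in> qring_carrier Q"
  by (simp add: qring_pullback_def qring_carrier_def)

lemma qring_pullback_pullback:
  assumes "\<tau> \<in> Q \<rightarrow> Q" "\<And>q. q \<in> Q \<Longrightarrow> \<sigma> (\<tau> q) = q" "x \<in> qring_carrier Q"
  shows "qring_pullback Q \<tau> (qring_pullback Q \<sigma> x) = x"
  using assms qring_pullback_in_carrier[OF assms(3)]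
  by (auto simp: qring_pullback_def qring_carrier_def fun_eq_iff)

lemma qring_pullback_basis:
  assumes "p \<in> Q" "\<sigma> p \<in> Q" "\<tau> (\<sigma> p) = p" "\<And>r. r \<in> Q \<Longrightarrow> \<sigma> (\<tau> r) = r"
  shows "qring_pullback Q \<tau> (qring_basis p) = qring_basis (\<sigma> p)"
  using assms qring_basis_in_carrier[OF assms(1)]
  by (auto simp: qring_pullback_def qring_basis_def fun_eq_iff)

locale finite_magma =
  fixes Q :: "'a set" and op :: "'a \<Rightarrow> 'a \<Rightarrow> 'a"
  assumes finite_carrier: "finite Q"
    and op_closed: "x \<in> Q \<Longrightarrow> y \<in> Q \<Longrightarrow> op x y \<in> Q"
begin

lemma qring_mult_closed: "qring_mult Q op x y \<in> qring_carrier Q"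
  unfolding qring_carrier_def
proof safe
  fix q assume "q \<notin> Q"
  then have "{(p, r). p \<in> Q \<and> r \<in> Q \<and> op p r = q} = {}"
    using op_closed by auto
  then show "qring_mult Q op x y q = 0"
    unfolding qring_mult_def by (simp only: sum.empty)
qed

lemma quandle_Aut_inv_closed:
  assumes "\<sigma> \<in> carrier (quandle_Aut Q op)"
  shows "restrict (inv_into Q \<sigma>) Q \<in> carrier (quandle_Aut Q op)"
proof -
  have \<sigma>: "bij_betw \<sigma> Q Q" and hom: "\<And>x y. x \<in> Q \<Longrightarrow> y \<in> Q \<Longrightarrow> \<sigma> (op x y) = op (\<sigma> x) (\<sigma> y)"
    using assms by (auto simp: carrier_quandle_Aut Bij_def)
  let ?\<tau> = "inv_into Q \<sigma>"
  have "?\<tau> (op x y) = op (?\<tau> x) (?\<tau> y)" if "x \<in> Q" "y \<in> Q" for x y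
  proof -
    have "?\<tau> x \<in> Q" "?\<tau> y \<in> Q" "\<sigma> (?\<tau> x) = x" "\<sigma> (?\<tau> y) = y"
      using \<sigma> that by (auto simp: bij_betw_def inv_into_into f_inv_into_f)
    then have "op x y = \<sigma> (op (?\<tau> x) (?\<tau> y))" by (simp add: hom)
    then show ?thesis
      using \<sigma> op_closed \<open>?\<tau> x \<in> Q\<close> \<open>?\<tau> y \<in> Q\<close> by (simp add: bij_betw_def inv_into_f_f)
  qed
  moreover have "restrict ?\<tau> Q \<in> Bij Q"
    using assms restrict_inv_into_Bij by (auto simp: carrier_quandle_Aut)
  ultimately show ?thesis
    using op_closed by (simp add: carrier_quandle_Aut)
qed

lemma qring_pullback_mult:
  assumes \<tau>: "\<tau> \<in> carrier (quandle_Aut Q op)"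
    and x: "x \<in> qring_carrier Q" and y: "y \<in> qring_carrier Q"
  shows "qring_pullback Q \<tau> (qring_mult Q op x y) =
    qring_mult Q op (qring_pullback Q \<tau> x) (qring_pullback Q \<tau> y)"
proof
  fix q
  let ?S = "\<lambda>q. {(a, b). a \<in> Q \<and> b \<in> Q \<and> op a b = q}"
  define \<sigma> where "\<sigma> = restrict (inv_into Q \<tau>) Q"
  have \<tau>_bij: "bij_betw \<tau> Q Q"
    and \<tau>_hom: "\<And>a b. a \<in> Q \<Longrightarrow> b \<in> Q \<Longrightarrow> \<tau> (op a b) = op (\<tau> a) (\<tau> b)"
    using \<tau> by (auto simp: carrier_quandle_Aut Bij_def)
  have \<sigma>_bij: "bij_betw \<sigma> Q Q"
    and \<sigma>_hom: "\<And>a b. a \<in> Q \<Longrightarrow> b \<in> Q \<Longrightarrow> \<sigma> (op a b) = op (\<sigma> a) (\<sigma> b)"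
    using quandle_Aut_inv_closed[OF \<tau>] by (auto simp: carrier_quandle_Aut Bij_def \<sigma>_def)
  have \<sigma>\<tau>: "\<sigma> (\<tau> a) = a" and \<tau>\<sigma>: "\<tau> (\<sigma> a) = a" if "a \<in> Q" for a
    using \<tau>_bij that by (auto simp: bij_betw_def inv_into_f_f f_inv_into_f \<sigma>_def)
  show "qring_pullback Q \<tau> (qring_mult Q op x y) q =
    qring_mult Q op (qring_pullback Q \<tau> x) (qring_pullback Q \<tau> y) q"
  proof (cases "q \<in> Q")
    case False
    then show ?thesis
      using qring_mult_closed qring_mult_closed[of "qring_pullback Q \<tau> x"]
      by (simp add: qring_pullback_def qring_carrier_def)
  next
    case True
    have "qring_mult Q op (qring_pullback Q \<tau> x) (qring_pullback Q \<tau> y) q =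
        (\<Sum>(a, b) \<in> ?S q. x (\<tau> a) * y (\<tau> b))"
      using x y by (auto simp: qring_mult_def qring_pullback_def intro!: sum.cong)
    also have "\<dots> = (\<Sum>(a, b) \<in> ?S (\<tau> q). x a * y b)"
    proof (rule sum.reindex_bij_witness[where j = "map_prod \<tau> \<tau>" and i = "map_prod \<sigma> \<sigma>"])
      show "map_prod \<sigma> \<sigma> (map_prod \<tau> \<tau> z) = z" if "z \<in> ?S q" for z
        using that \<sigma>\<tau> by auto
      show "map_prod \<tau> \<tau> z \<in> ?S (\<tau> q)" if "z \<in> ?S q" for z
        using that \<tau>_hom bij_betwE[OF \<tau>_bij] by auto
      show "map_prod \<tau> \<tau> (map_prod \<sigma> \<sigma> z) = z" if "z \<in> ?S (\<tau> q)" for z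
        using that \<tau>\<sigma> by auto
      show "map_prod \<sigma> \<sigma> z \<in> ?S q" if "z \<in> ?S (\<tau> q)" for z
        using that bij_betwE[OF \<sigma>_bij] \<sigma>\<tau>[OF True] by (auto simp flip: \<sigma>_hom)
    qed auto
    also have "\<dots> = qring_pullback Q \<tau> (qring_mult Q op x y) q"
      using True qring_mult_closed by (simp add: qring_pullback_def qring_mult_def)
    finally show ?thesis ..
  qed
qed

lemma qring_pullback_in_auts:
  assumes \<tau>: "\<tau> \<in> carrier (quandle_Aut Q op)"
  shows "qring_pullback Q \<tau> \<in> qring_auts Q op"
proof -
  define \<sigma> where "\<sigma> = restrict (inv_into Q \<tau>) Q"
  have \<tau>_bij: "bij_betw \<tau> Q Q" using \<tau> by (simp add: carrier_quandle_Aut Bij_def)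
  then have maps: "\<tau> \<in> Q \<rightarrow> Q" "\<sigma> \<in> Q \<rightarrow> Q"
    by (auto simp: bij_betw_def inv_into_into \<sigma>_def)
  have inverse: "\<sigma> (\<tau> a) = a" "\<tau> (\<sigma> a) = a" if "a \<in> Q" for a
    using \<tau>_bij that by (auto simp: bij_betw_def inv_into_f_f f_inv_into_f \<sigma>_def)
  have "bij_betw (qring_pullback Q \<tau>) (qring_carrier Q) (qring_carrier Q)"
    by (rule bij_betw_byWitness[where f' = "qring_pullback Q \<sigma>"])
      (auto simp: qring_pullback_pullback[OF maps(1) inverse(1)]
        qring_pullback_pullback[OF maps(2) inverse(2)] qring_pullback_in_carrier)
  moreover have "qring_pullback Q \<tau> (qring_add x y) =
      qring_add (qring_pullback Q \<tau> x) (qring_pullback Q \<tau> y)"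
    if "x \<in> qring_carrier Q" "y \<in> qring_carrier Q" for x y
    using that qring_add_closed[OF that] by (auto simp: qring_pullback_def qring_add_def)
  ultimately show ?thesis
    using qring_pullback_mult[OF \<tau>] by (simp add: qring_auts_def Bij_def qring_pullback_def)
qed

end

section \<open>Magmas whose quandle ring has only trivial idempotents\<close>

definition qring_idempotents :: "'a set \<Rightarrow> ('a \<Rightarrow> 'a \<Rightarrow> 'a) \<Rightarrow> ('a \<Rightarrow> int) set" where
  "qring_idempotents Q op = {x \<in> qring_carrier Q. qring_mult Q op x x = x}"

definition qring_aut_perm :: "'a set \<Rightarrow> (('a \<Rightarrow> int) \<Rightarrow> ('a \<Rightarrow> int)) \<Rightarrow> 'a \<Rightarrow> 'a" where
  "qring_aut_perm Q f = (\<lambda>q \<in> Q. THE p. p \<in> Q \<and> f (qring_basis q) = qring_basis p)"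

lemma qring_aut_perm_eqI:
  "q \<in> Q \<Longrightarrow> p \<in> Q \<Longrightarrow> f (qring_basis q) = qring_basis p \<Longrightarrow> qring_aut_perm Q f q = p"
  by (auto simp: qring_aut_perm_def)

locale trivial_idempotents_magma = finite_magma +
  assumes qring_idempotents_eq: "qring_idempotents Q op = insert (\<lambda>_. 0) (qring_basis ` Q)"
begin

lemma qring_aut_basis:
  assumes f: "f \<in> qring_auts Q op" and q: "q \<in> Q"
  obtains p where "p \<in> Q" "f (qring_basis q) = qring_basis p"
proof -
  note f_bij = qring_autsD(1)[OF f] and basis = qring_basis_in_carrier[OF q]
  have "qring_basis q \<in> qring_idempotents Q op"
    using qring_idempotents_eq q by auto
  then have "qring_mult Q op (f (qring_basis q)) (f (qring_basis q)) = f (qring_basis q)"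
    using qring_autsD(4)[OF f basis basis] by (simp add: qring_idempotents_def)
  then have "f (qring_basis q) \<in> qring_idempotents Q op"
    using bij_betwE[OF f_bij] basis by (simp add: qring_idempotents_def)
  moreover have "f (qring_basis q) \<noteq> (\<lambda>_. 0)"
  proof
    assume "f (qring_basis q) = (\<lambda>_. 0)"
    then have "f (qring_basis q) = f (\<lambda>_. 0)"
      using qring_additive_zero[OF qring_autsD(3)[OF f]] by simp
    then have "qring_basis q = (\<lambda>_. 0)"
      by (rule inj_onD[OF bij_betw_imp_inj_on[OF f_bij]]) (simp_all add: basis zero_in_qring_carrier)
    then show False by (simp add: qring_basis_neq_zero)
  qed
  ultimately show ?thesis
    using that qring_idempotents_eq by auto
qed

lemma qring_aut_perm_basis:
  assumes "f \<in> qring_auts Q op" "q \<in> Q"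
  shows "qring_aut_perm Q f q \<in> Q" "f (qring_basis q) = qring_basis (qring_aut_perm Q f q)"
  using qring_aut_basis[OF assms] qring_aut_perm_eqI[OF assms(2)] by metis+

lemma qring_aut_perm_in_quandle_Aut:
  assumes f: "f \<in> qring_auts Q op"
  shows "qring_aut_perm Q f \<in> carrier (quandle_Aut Q op)"
proof -
  let ?\<pi> = "qring_aut_perm Q f"
  note \<pi>_in = qring_aut_perm_basis(1)[OF f] and f_basis = qring_aut_perm_basis(2)[OF f]
  have \<pi>_inj: "inj_on ?\<pi> Q"
  proof (rule inj_onI)
    fix x y assume xy: "x \<in> Q" "y \<in> Q" and "?\<pi> x = ?\<pi> y"
    then have "f (qring_basis x) = f (qring_basis y)" by (simp add: f_basis)
    then have "qring_basis x = qring_basis y"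
      by (rule inj_onD[OF bij_betw_imp_inj_on[OF qring_autsD(1)[OF f]]])
        (simp_all add: qring_basis_in_carrier xy)
    then show "x = y" by simp
  qed
  moreover have "?\<pi> ` Q = Q"
    using \<pi>_in by (intro endo_inj_surj[OF finite_carrier _ \<pi>_inj]) auto
  moreover have "?\<pi> (op x y) = op (?\<pi> x) (?\<pi> y)" if "x \<in> Q" "y \<in> Q" for x y
  proof (rule qring_aut_perm_eqI)
    show "op x y \<in> Q" "op (?\<pi> x) (?\<pi> y) \<in> Q" using that \<pi>_in op_closed by auto
    have "f (qring_basis (op x y)) = f (qring_mult Q op (qring_basis x) (qring_basis y))"
      using that by (simp add: qring_mult_basis[OF finite_carrier])
    also have "\<dots> = qring_mult Q op (qring_basis (?\<pi> x)) (qring_basis (?\<pi> y))"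
      using that by (simp add: qring_autsD(4)[OF f] qring_basis_in_carrier f_basis)
    finally show "f (qring_basis (op x y)) = qring_basis (op (?\<pi> x) (?\<pi> y))"
      using that \<pi>_in by (simp add: qring_mult_basis[OF finite_carrier])
  qed
  ultimately show ?thesis
    by (simp add: carrier_quandle_Aut Bij_def bij_betw_def qring_aut_perm_def)
qed

lemma qring_aut_perm_compose:
  assumes f: "f \<in> qring_auts Q op" and g: "g \<in> qring_auts Q op"
  shows "qring_aut_perm Q (compose (qring_carrier Q) f g) =
    compose Q (qring_aut_perm Q f) (qring_aut_perm Q g)"
proof
  fix q
  show "qring_aut_perm Q (compose (qring_carrier Q) f g) q =
      compose Q (qring_aut_perm Q f) (qring_aut_perm Q g) q"
  proof (cases "q \<in> Q")
    case True
    then show ?thesis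
      using qring_aut_perm_basis[OF g True] qring_aut_perm_basis[OF f]
      by (auto simp: compose_def qring_basis_in_carrier intro!: qring_aut_perm_eqI)
  qed (simp add: qring_aut_perm_def compose_def)
qed

lemma inj_on_qring_aut_perm: "inj_on (qring_aut_perm Q) (qring_auts Q op)"
proof (rule inj_onI)
  fix f g assume f: "f \<in> qring_auts Q op" and g: "g \<in> qring_auts Q op"
    and eq: "qring_aut_perm Q f = qring_aut_perm Q g"
  show "f = g"
  proof (rule extensionalityI)
    show "f \<in> extensional (qring_carrier Q)" "g \<in> extensional (qring_carrier Q)"
      using qring_autsD(2) f g by auto
    show "f x = g x" if "x \<in> qring_carrier Q" for x
      using qring_additive_expansion[OF finite_carrier qring_autsD(3)[OF f] that]
        qring_additive_expansion[OF finite_carrier qring_autsD(3)[OF g] that]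
        qring_aut_perm_basis(2)[OF f] qring_aut_perm_basis(2)[OF g] eq
      by simp
  qed
qed

lemma qring_aut_perm_pullback_inv:
  assumes \<sigma>: "\<sigma> \<in> carrier (quandle_Aut Q op)"
  shows "qring_aut_perm Q (qring_pullback Q (restrict (inv_into Q \<sigma>) Q)) = \<sigma>"
proof
  fix q
  define \<tau> where "\<tau> = restrict (inv_into Q \<sigma>) Q"
  have \<sigma>_bij: "bij_betw \<sigma> Q Q" and "\<sigma> \<in> extensional Q"
    using \<sigma> by (auto simp: carrier_quandle_Aut Bij_def)
  have inverse: "\<sigma> (\<tau> r) = r" "\<tau> (\<sigma> r) = r" if "r \<in> Q" for r
    using \<sigma>_bij that by (auto simp: bij_betw_def inv_into_f_f f_inv_into_f \<tau>_def)
  show "qring_aut_perm Q (qring_pullback Q \<tau>) q = \<sigma> q"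
  proof (cases "q \<in> Q")
    case True
    then show ?thesis
      using bij_betwE[OF \<sigma>_bij] inverse
      by (intro qring_aut_perm_eqI qring_pullback_basis) auto
  next
    case False
    with \<open>\<sigma> \<in> extensional Q\<close> show ?thesis by (simp add: qring_aut_perm_def extensional_def)
  qed
qed

theorem qring_aut_perm_iso: "qring_aut_perm Q \<in> iso (qring_Aut Q op) (quandle_Aut Q op)"
proof (rule isoI)
  show "qring_aut_perm Q \<in> hom (qring_Aut Q op) (quandle_Aut Q op)"
    using qring_aut_perm_in_quandle_Aut qring_aut_perm_compose
    by (intro homI) (auto simp: carrier_qring_Aut mult_qring_Aut mult_quandle_Aut carrier_quandle_Aut)
  have "carrier (quandle_Aut Q op) \<subseteq> qring_aut_perm Q ` qring_auts Q op"
    using qring_aut_perm_pullback_inv qring_pullback_in_auts quandle_Aut_inv_closed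
    by (metis image_eqI subsetI)
  then show "bij_betw (qring_aut_perm Q) (carrier (qring_Aut Q op)) (carrier (quandle_Aut Q op))"
    using inj_on_qring_aut_perm qring_aut_perm_in_quandle_Aut
    by (auto simp: bij_betw_def carrier_qring_Aut)
qed

end

section \<open>Groups of bijections\<close>

definition Bij_transport :: "('a \<Rightarrow> 'b) \<Rightarrow> ('b \<Rightarrow> 'a) \<Rightarrow> 'b set \<Rightarrow> ('a \<Rightarrow> 'a) \<Rightarrow> 'b \<Rightarrow> 'b" where
  "Bij_transport h g B f = (\<lambda>b \<in> B. h (f (g b)))"

lemma Bij_transport_hom:
  assumes h: "h \<in> A \<rightarrow> B" and g: "g \<in> B \<rightarrow> A"
    and gh: "\<And>a. a \<in> A \<Longrightarrow> g (h a) = a" and hg: "\<And>b. b \<in> B \<Longrightarrow> h (g b) = b"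
  shows "Bij_transport h g B \<in> hom (BijGroup A) (BijGroup B)"
proof (rule homI)
  have h_bij: "bij_betw h A B" and g_bij: "bij_betw g B A"
    using assms by (auto intro!: bij_betw_byWitness[where f' = g] bij_betw_byWitness[where f' = h])
  show closed: "Bij_transport h g B f \<in> carrier (BijGroup B)" if "f \<in> carrier (BijGroup A)" for f
  proof -
    have "bij_betw (h \<circ> f \<circ> g) B B"
      using that h_bij g_bij by (auto simp: BijGroup_def Bij_def intro: bij_betw_trans)
    then show ?thesis
      by (simp add: BijGroup_def Bij_def Bij_transport_def cong: bij_betw_cong)
  qed
  show "Bij_transport h g B (f1 \<otimes>\<^bsub>BijGroup A\<^esub> f2) =
      Bij_transport h g B f1 \<otimes>\<^bsub>BijGroup B\<^esub> Bij_transport h g B f2"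
    if "f1 \<in> carrier (BijGroup A)" "f2 \<in> carrier (BijGroup A)" for f1 f2
    using that closed[OF that(1)] closed[OF that(2)] h g gh Bij_imp_funcset[of f2 A]
    by (auto simp: BijGroup_def Bij_transport_def compose_def fun_eq_iff Pi_iff)
qed

lemma Bij_transport_iso:
  assumes "h \<in> A \<rightarrow> B" "g \<in> B \<rightarrow> A" "\<And>a. a \<in> A \<Longrightarrow> g (h a) = a" "\<And>b. b \<in> B \<Longrightarrow> h (g b) = b"
  shows "Bij_transport h g B \<in> iso (BijGroup A) (BijGroup B)"
proof (rule group_isomorphisms_imp_iso)
  have "Bij_transport g h A (Bij_transport h g B f) = f" if "f \<in> Bij A" for f
    using assms that Bij_imp_funcset[OF that] Bij_imp_extensional[OF that]
    by (auto simp: Bij_transport_def fun_eq_iff extensional_def Pi_iff)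
  moreover have "Bij_transport h g B (Bij_transport g h A f) = f" if "f \<in> Bij B" for f
    using assms that Bij_imp_funcset[OF that] Bij_imp_extensional[OF that]
    by (auto simp: Bij_transport_def fun_eq_iff extensional_def Pi_iff)
  ultimately show "group_isomorphisms (BijGroup A) (BijGroup B) (Bij_transport h g B) (Bij_transport g h A)"
    using Bij_transport_hom[OF assms] Bij_transport_hom[OF assms(2,1,4,3)]
    by (simp add: group_isomorphisms_def BijGroup_def)
qed

lemma sym_group_iso_BijGroup: "(\<lambda>p. restrict p {1..n}) \<in> iso (sym_group n) (BijGroup {1..n})"
proof (rule isoI)
  show "(\<lambda>p. restrict p {1..n}) \<in> hom (sym_group n) (BijGroup {1..n})"
  proof (rule homI)
    fix p q assume "p \<in> carrier (sym_group n)" "q \<in> carrier (sym_group n)"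
    then have p: "p permutes {1..n}" and q: "q permutes {1..n}"
      by (simp_all add: sym_group_carrier)
    then have Bij: "restrict p {1..n} \<in> Bij {1..n}" "restrict q {1..n} \<in> Bij {1..n}"
      by (simp_all add: Bij_def permutes_imp_bij)
    then show "restrict p {1..n} \<in> carrier (BijGroup {1..n})"
      by (simp add: BijGroup_def)
    show "restrict (p \<otimes>\<^bsub>sym_group n\<^esub> q) {1..n} =
        restrict p {1..n} \<otimes>\<^bsub>BijGroup {1..n}\<^esub> restrict q {1..n}"
      using Bij permutes_in_image[OF q]
      by (auto simp: sym_group_mult BijGroup_def compose_def fun_eq_iff)
  qed
  show "bij_betw (\<lambda>p. restrict p {1..n}) (carrier (sym_group n)) (carrier (BijGroup {1..n}))"
  proof (intro bij_betw_byWitness[where f' = "\<lambda>f x. if x \<in> {1..n} then f x else x"] ballI)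
    show "(\<lambda>x. if x \<in> {1..n} then restrict p {1..n} x else x) = p"
      if "p \<in> carrier (sym_group n)" for p
      using that by (auto simp: sym_group_carrier permutes_not_in)
    show "restrict (\<lambda>x. if x \<in> {1..n} then f x else x) {1..n} = f"
      if "f \<in> carrier (BijGroup {1..n})" for f
      using that by (auto simp: BijGroup_def Bij_def extensional_def)
    show "(\<lambda>p. restrict p {1..n}) ` carrier (sym_group n) \<subseteq> carrier (BijGroup {1..n})"
      by (auto simp: sym_group_carrier BijGroup_def Bij_def permutes_imp_bij)
    show "(\<lambda>f x. if x \<in> {1..n} then f x else x) ` carrier (BijGroup {1..n}) \<subseteq> carrier (sym_group n)"
    proof (rule image_subsetI)
      fix f assume "f \<in> carrier (BijGroup {1..n})"
      then have "bij_betw (\<lambda>x. if x \<in> {1..n} then f x else x) {1..n} {1..n}"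
        by (auto simp: BijGroup_def Bij_def intro: bij_betw_cong[THEN iffD1, rotated])
      then show "(\<lambda>x. if x \<in> {1..n} then f x else x) \<in> carrier (sym_group n)"
        unfolding sym_group_carrier by (rule bij_imp_permutes) auto
    qed
  qed
qed

section \<open>The dihedral quandle of order three\<close>

lemma R3_op_idem: "i \<in> R3 \<Longrightarrow> R3_op i i = i"
  by (auto simp: R3_def R3_op_def)

lemma R3_op_third:
  assumes "i \<in> R3" "j \<in> R3" "i \<noteq> j"
  shows "R3 - {i, j} = {R3_op i j}"
  using assms by (auto simp: R3_def R3_op_def)

lemma quandle_Aut_R3: "quandle_Aut R3 R3_op = BijGroup R3"
proof -
  have "\<sigma> (R3_op i j) = R3_op (\<sigma> i) (\<sigma> j)" if \<sigma>: "\<sigma> \<in> Bij R3" and "i \<in> R3" "j \<in> R3" for \<sigma> i j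
  proof (cases "i = j")
    case True
    then show ?thesis using that Bij_imp_funcset[OF \<sigma>] by (simp add: R3_op_idem Pi_iff)
  next
    case False
    have \<sigma>_bij: "bij_betw \<sigma> R3 R3" using \<sigma> by (simp add: Bij_def)
    then have "\<sigma> i \<noteq> \<sigma> j" "\<sigma> i \<in> R3" "\<sigma> j \<in> R3"
      using False that(2,3) by (auto simp: bij_betw_def inj_on_eq_iff)
    then have "{R3_op (\<sigma> i) (\<sigma> j)} = R3 - {\<sigma> i, \<sigma> j}"
      by (simp add: R3_op_third)
    also have "\<dots> = \<sigma> ` (R3 - {i, j})"
      using \<sigma>_bij that(2,3) inj_on_image_set_diff[of \<sigma> R3 R3 "{i, j}"] by (simp add: bij_betw_def)
    also have "\<dots> = {\<sigma> (R3_op i j)}"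
      using False that(2,3) by (simp add: R3_op_third)
    finally show ?thesis by simp
  qed
  then show ?thesis
    by (auto simp: quandle_Aut_def BijGroup_def)
qed

lemma qring_mult_R3:
  "qring_mult R3 R3_op x y 0 = x 0 * y 0 + x 1 * y 2 + x 2 * y 1"
  "qring_mult R3 R3_op x y 1 = x 1 * y 1 + x 0 * y 2 + x 2 * y 0"
  "qring_mult R3 R3_op x y 2 = x 2 * y 2 + x 0 * y 1 + x 1 * y 0"
proof -
  have "{(p, r). p \<in> R3 \<and> r \<in> R3 \<and> R3_op p r = 0} = {(0, 0), (1, 2), (2, 1)}"
    "{(p, r). p \<in> R3 \<and> r \<in> R3 \<and> R3_op p r = 1} = {(1, 1), (0, 2), (2, 0)}"
    "{(p, r). p \<in> R3 \<and> r \<in> R3 \<and> R3_op p r = 2} = {(2, 2), (0, 1), (1, 0)}"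
    by (auto simp: R3_def R3_op_def)
  then show "qring_mult R3 R3_op x y 0 = x 0 * y 0 + x 1 * y 2 + x 2 * y 1"
    "qring_mult R3 R3_op x y 1 = x 1 * y 1 + x 0 * y 2 + x 2 * y 0"
    "qring_mult R3 R3_op x y 2 = x 2 * y 2 + x 0 * y 1 + x 1 * y 0"
    unfolding qring_mult_def by simp_all
qed

lemma inj_on_R3_coordinates: "inj_on (\<lambda>x. (x 0, x 1, x 2)) (qring_carrier R3)"
proof (rule inj_onI, rule ext)
  fix x y q assume "x \<in> qring_carrier R3" "y \<in> qring_carrier R3" "(x 0, x 1, x 2) = (y 0, y 1, y 2)"
  then show "x q = y q" by (cases "q \<in> R3") (auto simp: qring_carrier_def R3_def)
qed

text \<open>The sum \<open>s = a + b + c\<close> is itself idempotent, and subtracting two of the equations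
  gives \<open>(a - b)(s - 3c - 1) = 0\<close> and its cyclic variants.\<close>

lemma int_idempotent_triple:
  fixes a b c :: int
  assumes "a * a + 2 * b * c = a" "b * b + 2 * a * c = b" "c * c + 2 * a * b = c"
  shows "(a, b, c) \<in> {(0, 0, 0), (1, 0, 0), (0, 1, 0), (0, 0, 1)}"
proof -
  let ?s = "a + b + c"
  have "?s * ?s = (a * a + 2 * b * c) + (b * b + 2 * a * c) + (c * c + 2 * a * b)"
    by (simp add: algebra_simps)
  then have "?s * ?s = ?s" by (simp add: assms)
  then have s: "?s = 0 \<or> ?s = 1" by auto
  have "(a - b) * (?s - 3 * c - 1) = (a * a + 2 * b * c - a) - (b * b + 2 * a * c - b)"
    "(a - c) * (?s - 3 * b - 1) = (a * a + 2 * b * c - a) - (c * c + 2 * a * b - c)"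
    "(b - c) * (?s - 3 * a - 1) = (b * b + 2 * a * c - b) - (c * c + 2 * a * b - c)"
    by (simp_all add: algebra_simps)
  then have "(a - b) * (?s - 3 * c - 1) = 0" "(a - c) * (?s - 3 * b - 1) = 0"
    "(b - c) * (?s - 3 * a - 1) = 0"
    by (simp_all add: assms)
  then have "a = b \<or> ?s = 3 * c + 1" "a = c \<or> ?s = 3 * b + 1" "b = c \<or> ?s = 3 * a + 1"
    unfolding mult_eq_0_iff by linarith+
  with s show ?thesis by simp presburger
qed

lemma qring_idempotents_R3: "qring_idempotents R3 R3_op = insert (\<lambda>_. 0) (qring_basis ` R3)"
proof (intro equalityI subsetI)
  fix x assume "x \<in> qring_idempotents R3 R3_op"
  then have x: "x \<in> qring_carrier R3" and idem: "qring_mult R3 R3_op x x = x"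
    by (simp_all add: qring_idempotents_def)
  have "x 0 * x 0 + 2 * x 1 * x 2 = x 0" "x 1 * x 1 + 2 * x 0 * x 2 = x 1"
    "x 2 * x 2 + 2 * x 0 * x 1 = x 2"
    using qring_mult_R3[of x x] idem by (simp_all add: algebra_simps)
  then have "(x 0, x 1, x 2) \<in> {(0, 0, 0), (1, 0, 0), (0, 1, 0), (0, 0, 1)}"
    by (rule int_idempotent_triple)
  also have "\<dots> = (\<lambda>x. (x 0, x 1, x 2)) ` insert (\<lambda>_. 0) (qring_basis ` R3)"
    by (auto simp: R3_def qring_basis_def)
  finally have coordinates:
    "(x 0, x 1, x 2) \<in> (\<lambda>x. (x 0, x 1, x 2)) ` insert (\<lambda>_. 0) (qring_basis ` R3)" .
  have "insert (\<lambda>_. 0) (qring_basis ` R3) \<subseteq> qring_carrier R3"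
    by (simp add: zero_in_qring_carrier image_subset_iff qring_basis_in_carrier)
  from inj_on_image_mem_iff[OF inj_on_R3_coordinates x this] coordinates
  show "x \<in> insert (\<lambda>_. 0) (qring_basis ` R3)" by simp
next
  fix x assume "x \<in> insert (\<lambda>_. 0) (qring_basis ` R3)"
  moreover have "(\<lambda>_. 0) \<in> qring_idempotents R3 R3_op"
    by (simp add: qring_idempotents_def qring_carrier_def qring_mult_def)
  moreover have "qring_basis i \<in> qring_idempotents R3 R3_op" if "i \<in> R3" for i
    using that qring_mult_basis[of R3 i i] qring_basis_in_carrier[OF that]
    by (simp add: qring_idempotents_def R3_op_idem R3_def)
  ultimately show "x \<in> qring_idempotents R3 R3_op" by blast
qed

interpretation R3: trivial_idempotents_magma R3 R3_op
proof
  show "finite R3" by (simp add: R3_def)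
  show "R3_op x y \<in> R3" for x y by (auto simp: R3_def R3_op_def)
qed (rule qring_idempotents_R3)

theorem proposition6p3:
  shows "qring_Aut R3 R3_op \<cong> sym_group 3 \<and> sym_group 3 \<cong> quandle_Aut R3 R3_op"
proof -
  have "sym_group 3 \<cong> BijGroup {1..3::nat}"
    using sym_group_iso_BijGroup by (rule is_isoI)
  also have "BijGroup {1..3::nat} \<cong> BijGroup R3"
    by (rule is_isoI[OF Bij_transport_iso[where h = "\<lambda>k. k - 1" and g = Suc]])
      (auto simp: R3_def)
  also have "BijGroup R3 = quandle_Aut R3 R3_op"
    by (rule quandle_Aut_R3[symmetric])
  finally have sym_quandle: "sym_group 3 \<cong> quandle_Aut R3 R3_op" .
  have "qring_Aut R3 R3_op \<cong> quandle_Aut R3 R3_op"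
    using R3.qring_aut_perm_iso by (rule is_isoI)
  also have "quandle_Aut R3 R3_op \<cong> sym_group 3"
    using sym_quandle by (rule group.iso_sym[OF sym_group_is_group])
  finally show ?thesis
    using sym_quandle by simp
qed

end
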